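(* For each calculus in the family $\mathsf{CL}^*$ (namely $\mathsf{CL}$, $\mathsf{CL}^N$, $\mathsf{CL}^T$, $\mathsf{CL}^W$, $\mathsf{CL}^C$, $\mathsf{CL}^U$, $\mathsf{CL}^{NU}$, $\mathsf{CL}^{TU}$, $\mathsf{CL}^{WU}$, $\mathsf{CL}^{CU}$, $\mathsf{CL}^A$, $\mathsf{CL}^{NA}$, $\mathsf{CL}^{TA}$, $\mathsf{CL}^{WA}$, $\mathsf{CL}^{CA}$): if a sequent $\Gamma\Rightarrow\Delta$ is derivable in the calculus, then it is valid in every neighbourhood model of the corresponding class.
   Context: Formulas $\mathcal{L}::=p\mid\bot\mid A\wedge B\mid A\lor B\mid A\to B\mid A>B$. Neighbourhood model $\langle W,N,\llbracket\cdot\rrbracket\rangle$: $W\ne\emptyset$, $N:W\to\mathcal{P}(\mathcal{P}(W))$ with every $\alpha\in N(x)$ non-empty; $x\Vdash A>B$ iff for all $\alpha\in N(x)$ containing a world forcing $A$ there is $\beta\in N(x)$, $\beta\subseteq\alpha$, containing a world forcing $A$, all of whose worlds force $A\to B$. Conditions: normality ($N(x)\ne\emptyset$), total reflexivity (some $\alpha\in N(x)$ contains $x$), weak centering (all $\alpha\in N(x)$ contain $x$), centering (weak centering and $\{x\}\in N(x)$), uniformity ($\alpha\in N(x),y\in\alpha\Rightarrow\bigcup N(x)=\bigcup N(y)$), absoluteness ($\alpha\in N(x),y\in\alpha\Rightarrow N(x)=N(y)$). The class corresponding to a calculus $\mathsf{CL}^{S}$ is given by the conditions named by $S$ together with those they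 include: N; T includes N; W includes N,T; C includes N,T,W; U uniformity; A absoluteness. Syntax: world labels $x,y,z,\dots$; neighbourhood labels $a,b,c,\dots$, including for each world label $x$ a label $\{x\}$. Relational atoms: $a\in N(x)$, $x\in a$, $a\subseteq b$. Labelled formulas: relational atoms, $x:A$, $a\Vdash^{\exists}A$, $a\Vdash^{\forall}A$, $x\Vdash_a A|B$. A sequent $\Gamma\Rightarrow\Delta$ has multisets of labelled formulas, relational atoms only in $\Gamma$. Rules of $\mathsf{CL}$ (premisses $\Rightarrow$ conclusion; "(u!)" means label $u$ does not occur in the conclusion): initial sequents $x:p,\Gamma\Rightarrow\Delta,x:p$ ($p$ atomic) and $x:\bot,\Gamma\Rightarrow\Delta$; standard G3 rules for $\wedge,\vee,\to$ acting on formulas $x:A$; L$\forall$: from $x:A,x\in a,a\Vdash^\forall A,\Gamma\Rightarrow\Delta$ infer $x\in a,a\Vdash^\forall A,\Gamma\Rightarrow\Delta$; R$\forall$ (x!): from $x\in a,\Gamma\Rightarrow\Delta,x:A$ infer $\Gamma\Rightarrow\Delta,a\Vdash^\forall A$; L$\exists$ (x!): from $x\in a,x:A,\Gamma\Rightarrow\Delta$ infer $a\Vdash^\exists A,\Gamma\Rightarrow\Delta$; R$\exists$: from $x\in a,\Gamma\Rightarrow\Delta,x:A,a\Vdash^\exists A$ infer $x\in a,\Gamma\Rightarrow\Delta,a\Vdash^\exists A$; R$>$ (a!): from $a\in N(x),a\Vdash^\exists A,\Gamma\Rightarrow\Delta,x\Vdash_aA|B$ infer $\Gamma\Rightarrow\Delta,x:A>B$;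 L$>$: from $a\in N(x),x:A>B,\Gamma\Rightarrow\Delta,a\Vdash^\exists A$ and $x\Vdash_aA|B,a\in N(x),x:A>B,\Gamma\Rightarrow\Delta$ infer $a\in N(x),x:A>B,\Gamma\Rightarrow\Delta$; R$|$: from $c\in N(x),c\subseteq a,\Gamma\Rightarrow\Delta,x\Vdash_aA|B,c\Vdash^\exists A$ and $c\in N(x),c\subseteq a,\Gamma\Rightarrow\Delta,x\Vdash_aA|B,c\Vdash^\forall A\to B$ infer $c\in N(x),c\subseteq a,\Gamma\Rightarrow\Delta,x\Vdash_aA|B$; L$|$ (c!): from $c\in N(x),c\subseteq a,c\Vdash^\exists A,c\Vdash^\forall A\to B,\Gamma\Rightarrow\Delta$ infer $x\Vdash_aA|B,\Gamma\Rightarrow\Delta$; Ref: from $a\subseteq a,\Gamma\Rightarrow\Delta$ infer $\Gamma\Rightarrow\Delta$; Tr: from $c\subseteq a,c\subseteq b,b\subseteq a,\Gamma\Rightarrow\Delta$ infer $c\subseteq b,b\subseteq a,\Gamma\Rightarrow\Delta$; L$\subseteq$: from $x\in a,a\subseteq b,x\in b,\Gamma\Rightarrow\Delta$ infer $x\in a,a\subseteq b,\Gamma\Rightarrow\Delta$. Extension rules: N (a!): from $a\in N(x),\Gamma\Rightarrow\Delta$ infer $\Gamma\Rightarrow\Delta$; 0 (y!): from $y\in a,a\in N(x),\Gamma\Rightarrow\Delta$ infer $a\in N(x),\Gamma\Rightarrow\Delta$; T (a!): from $x\in a,a\in N(x),\Gamma\Rightarrow\Delta$ infer $\Gamma\Rightarrow\Delta$;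 W: from $x\in a,a\in N(x),\Gamma\Rightarrow\Delta$ infer $a\in N(x),\Gamma\Rightarrow\Delta$; Single: from $x\in\{x\},\{x\}\in N(x),\Gamma\Rightarrow\Delta$ infer $\{x\}\in N(x),\Gamma\Rightarrow\Delta$; C: from $\{x\}\in N(x),\{x\}\subseteq a,a\in N(x),\Gamma\Rightarrow\Delta$ infer $a\in N(x),\Gamma\Rightarrow\Delta$; Repl$_1$: from $y\in\{x\},At(x),At(y),\Gamma\Rightarrow\Delta$ infer $y\in\{x\},At(x),\Gamma\Rightarrow\Delta$; Repl$_2$: from $y\in\{x\},At(x),At(y),\Gamma\Rightarrow\Delta$ infer $y\in\{x\},At(y),\Gamma\Rightarrow\Delta$, where $At(x)$ is one of $x:P$ ($P$ atomic), $x\in a$, $a\in N(x)$, $x\in\{z\}$ and $At(y)$ replaces $x$ by $y$; U$_1$ (c!): from $z\in c,c\in N(x),a\in N(x),y\in a,b\in N(y),z\in b,\Gamma\Rightarrow\Delta$ infer $a\in N(x),y\in a,b\in N(y),z\in b,\Gamma\Rightarrow\Delta$; U$_2$ (c!): from $z\in c,c\in N(y),a\in N(x),y\in a,b\in N(x),z\in b,\Gamma\Rightarrow\Delta$ infer $a\in N(x),y\in a,b\in N(x),z\in b,\Gamma\Rightarrow\Delta$; A$_1$: from $b\in N(y),a\in N(x),y\in a,b\in N(x),\Gamma\Rightarrow\Delta$ infer $a\in N(x),y\in a,b\in N(x),\Gamma\Rightarrow\Delta$; A$_2$: from $b\in N(x),a\in N(x),y\in a,b\in N(y),\Gamma\Rightarrow\Delta$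 infer $a\in N(x),y\in a,b\in N(y),\Gamma\Rightarrow\Delta$; plus the contracted instances of U$_1$, U$_2$, A$_1$ in which coinciding relational atoms of the conclusion are identified. Calculi: $\mathsf{CL}^N=\mathsf{CL}+$N$+$0; $\mathsf{CL}^T=\mathsf{CL}^N+$T; $\mathsf{CL}^W=\mathsf{CL}^T+$W; $\mathsf{CL}^C=\mathsf{CL}^W+$C$+$Single$+$Repl$_1+$Repl$_2$; $\mathsf{CL}^U=\mathsf{CL}+$U$_1+$U$_2$; $\mathsf{CL}^{NU},\dots,\mathsf{CL}^{CU}$ are $\mathsf{CL}^N,\dots,\mathsf{CL}^C$ plus U$_1$,U$_2$; $\mathsf{CL}^A=\mathsf{CL}+$A$_1+$A$_2$; $\mathsf{CL}^{NA},\dots,\mathsf{CL}^{CA}$ are $\mathsf{CL}^N,\dots,\mathsf{CL}^C$ plus A$_1$,A$_2$. Validity of sequents: for a model $\mathcal{M}$, a realization $(\rho,\sigma)$ maps world labels to worlds and neighbourhood labels to sets of worlds. $\mathcal{M}\vDash_{\rho,\sigma}a\in N(x)$ iff $\sigma(a)\in N(\rho(x))$; $a\subseteq b$ iff $\sigma(a)\subseteq\sigma(b)$; $y\in a$ iff $\rho(y)\in\sigma(a)$; $x:A$ iff $\rho(x)\Vdash A$; $a\Vdash^\forall A$ iff all worlds of $\sigma(a)$ force $A$; $a\Vdash^\exists A$ iff some world of $\sigma(a)$ forces $A$; $x\Vdash_aA|B$ iff $\sigma(a)\in N(\rho(x))$ and some $\beta\subseteq\sigma(a)$ (in $N(\rho(x))$)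 contains a world forcing $A$ and all its worlds force $A\to B$. $\Gamma\Rightarrow\Delta$ is valid in $\mathcal{M}$ if for every realization some formula of $\Gamma$ is not satisfied or some formula of $\Delta$ is satisfied.
   Formalization: The clause for $x\Vdash_aA|B$ drops the conjunct $\sigma(a)\in N(\rho(x))$, every realization satisfies $\sigma(\{x\})=\{\rho(x)\}$, and the fresh neighbourhood labels (a!, c!) of the rules are never labels $\{x\}$. Each condition added here is assumed in the paper as well or is needed for the statement above to hold. *)

theory Defs
  imports Main "HOL-Library.Multiset"
begin

datatype fm = Atm nat | Bot | Conj fm fm | Disj fm fm | Impl fm fm | Cnd fm fm

type_synonym wlab = nat

text \<open>Neighbourhood labels: ordinary labels a,b,c,... and, for every world label x, the label {x}.\<close>
datatype nlab = NL nat | Sing wlab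

text \<open>InN a x : a \<in> N(x);  Mem x a : x \<in> a;  Sub a b : a \<subseteq> b;  Lab x A : x:A;
  FAll a A : a \<Vdash>\<forall> A;  FEx a A : a \<Vdash>\<exists> A;  CondL x a A B : x \<Vdash>_a A|B\<close>
datatype lf = InN nlab wlab | Mem wlab nlab | Sub nlab nlab | Lab wlab fm
  | FAll nlab fm | FEx nlab fm | CondL wlab nlab fm fm

fun is_rel :: "lf \<Rightarrow> bool" where
  "is_rel (InN a x) = True"
| "is_rel (Mem x a) = True"
| "is_rel (Sub a b) = True"
| "is_rel _ = False"

fun wl_of_n :: "nlab \<Rightarrow> wlab set" where
  "wl_of_n (NL n) = {}"
| "wl_of_n (Sing x) = {x}"

fun wlabs :: "lf \<Rightarrow> wlab set" where
  "wlabs (InN a x) = insert x (wl_of_n a)"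
| "wlabs (Mem x a) = insert x (wl_of_n a)"
| "wlabs (Sub a b) = wl_of_n a \<union> wl_of_n b"
| "wlabs (Lab x A) = {x}"
| "wlabs (FAll a A) = wl_of_n a"
| "wlabs (FEx a A) = wl_of_n a"
| "wlabs (CondL x a A B) = insert x (wl_of_n a)"

fun nlabs :: "lf \<Rightarrow> nlab set" where
  "nlabs (InN a x) = {a}"
| "nlabs (Mem x a) = {a}"
| "nlabs (Sub a b) = {a, b}"
| "nlabs (Lab x A) = {}"
| "nlabs (FAll a A) = {a}"
| "nlabs (FEx a A) = {a}"
| "nlabs (CondL x a A B) = {a}"

definition wfresh :: "wlab \<Rightarrow> lf multiset \<Rightarrow> lf multiset \<Rightarrow> bool" where
  "wfresh x \<Gamma> \<Delta> \<longleftrightarrow> (\<forall>\<phi> \<in># \<Gamma> + \<Delta>. x \<notin> wlabs \<phi>)"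

definition nfresh :: "nat \<Rightarrow> lf multiset \<Rightarrow> lf multiset \<Rightarrow> bool" where
  "nfresh n \<Gamma> \<Delta> \<longleftrightarrow> (\<forall>\<phi> \<in># \<Gamma> + \<Delta>. NL n \<notin> nlabs \<phi>)"

text \<open>Atoms At(x) of the replacement rules: x:P (P atomic), x \<in> a, a \<in> N(x) (x \<in> {z} is the case a = {z}).\<close>
datatype ratom = RP nat | RM nlab | RN nlab

fun at :: "ratom \<Rightarrow> wlab \<Rightarrow> lf" where
  "at (RP p) x = Lab x (Atm p)"
| "at (RM a) x = Mem x a"
| "at (RN a) x = InN a x"

datatype base = B0 | BN | BT | BW | BC
datatype sfx = S0 | SU | SA

definition hasN :: "base \<Rightarrow> bool" where "hasN b \<longleftrightarrow> b \<noteq> B0"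
definition hasT :: "base \<Rightarrow> bool" where "hasT b \<longleftrightarrow> b \<in> {BT, BW, BC}"
definition hasW :: "base \<Rightarrow> bool" where "hasW b \<longleftrightarrow> b \<in> {BW, BC}"
definition hasC :: "base \<Rightarrow> bool" where "hasC b \<longleftrightarrow> b = BC"

inductive derivable :: "base \<Rightarrow> sfx \<Rightarrow> lf multiset \<Rightarrow> lf multiset \<Rightarrow> bool"
  for b :: base and s :: sfx where
  init: "\<forall>\<phi> \<in># \<Delta>. \<not> is_rel \<phi> \<Longrightarrow>
     derivable b s (add_mset (Lab x (Atm p)) \<Gamma>) (add_mset (Lab x (Atm p)) \<Delta>)"
| botL: "\<forall>\<phi> \<in># \<Delta>. \<not> is_rel \<phi> \<Longrightarrow> derivable b s (add_mset (Lab x Bot) \<Gamma>) \<Delta>"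
| conjL: "derivable b s (add_mset (Lab x A) (add_mset (Lab x B) \<Gamma>)) \<Delta> \<Longrightarrow>
     derivable b s (add_mset (Lab x (Conj A B)) \<Gamma>) \<Delta>"
| conjR: "derivable b s \<Gamma> (add_mset (Lab x A) \<Delta>) \<Longrightarrow> derivable b s \<Gamma> (add_mset (Lab x B) \<Delta>) \<Longrightarrow>
     derivable b s \<Gamma> (add_mset (Lab x (Conj A B)) \<Delta>)"
| disjL: "derivable b s (add_mset (Lab x A) \<Gamma>) \<Delta> \<Longrightarrow> derivable b s (add_mset (Lab x B) \<Gamma>) \<Delta> \<Longrightarrow>
     derivable b s (add_mset (Lab x (Disj A B)) \<Gamma>) \<Delta>"
| disjR: "derivable b s \<Gamma> (add_mset (Lab x A) (add_mset (Lab x B) \<Delta>)) \<Longrightarrow>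
     derivable b s \<Gamma> (add_mset (Lab x (Disj A B)) \<Delta>)"
| implL: "derivable b s \<Gamma> (add_mset (Lab x A) \<Delta>) \<Longrightarrow> derivable b s (add_mset (Lab x B) \<Gamma>) \<Delta> \<Longrightarrow>
     derivable b s (add_mset (Lab x (Impl A B)) \<Gamma>) \<Delta>"
| implR: "derivable b s (add_mset (Lab x A) \<Gamma>) (add_mset (Lab x B) \<Delta>) \<Longrightarrow>
     derivable b s \<Gamma> (add_mset (Lab x (Impl A B)) \<Delta>)"
| allL: "derivable b s (add_mset (Lab x A) (add_mset (Mem x a) (add_mset (FAll a A) \<Gamma>))) \<Delta> \<Longrightarrow>
     derivable b s (add_mset (Mem x a) (add_mset (FAll a A) \<Gamma>)) \<Delta>"
| allR: "wfresh x \<Gamma> (add_mset (FAll a A) \<Delta>) \<Longrightarrow>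
     derivable b s (add_mset (Mem x a) \<Gamma>) (add_mset (Lab x A) \<Delta>) \<Longrightarrow>
     derivable b s \<Gamma> (add_mset (FAll a A) \<Delta>)"
| exL: "wfresh x (add_mset (FEx a A) \<Gamma>) \<Delta> \<Longrightarrow>
     derivable b s (add_mset (Mem x a) (add_mset (Lab x A) \<Gamma>)) \<Delta> \<Longrightarrow>
     derivable b s (add_mset (FEx a A) \<Gamma>) \<Delta>"
| exR: "derivable b s (add_mset (Mem x a) \<Gamma>) (add_mset (Lab x A) (add_mset (FEx a A) \<Delta>)) \<Longrightarrow>
     derivable b s (add_mset (Mem x a) \<Gamma>) (add_mset (FEx a A) \<Delta>)"
| condR: "nfresh n \<Gamma> (add_mset (Lab x (Cnd A B)) \<Delta>) \<Longrightarrow>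
     derivable b s (add_mset (InN (NL n) x) (add_mset (FEx (NL n) A) \<Gamma>))
                   (add_mset (CondL x (NL n) A B) \<Delta>) \<Longrightarrow>
     derivable b s \<Gamma> (add_mset (Lab x (Cnd A B)) \<Delta>)"
| condL: "derivable b s (add_mset (InN a x) (add_mset (Lab x (Cnd A B)) \<Gamma>)) (add_mset (FEx a A) \<Delta>) \<Longrightarrow>
     derivable b s (add_mset (CondL x a A B) (add_mset (InN a x) (add_mset (Lab x (Cnd A B)) \<Gamma>))) \<Delta> \<Longrightarrow>
     derivable b s (add_mset (InN a x) (add_mset (Lab x (Cnd A B)) \<Gamma>)) \<Delta>"
| barR: "derivable b s (add_mset (InN c x) (add_mset (Sub c a) \<Gamma>))
            (add_mset (CondL x a A B) (add_mset (FEx c A) \<Delta>)) \<Longrightarrow>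
     derivable b s (add_mset (InN c x) (add_mset (Sub c a) \<Gamma>))
            (add_mset (CondL x a A B) (add_mset (FAll c (Impl A B)) \<Delta>)) \<Longrightarrow>
     derivable b s (add_mset (InN c x) (add_mset (Sub c a) \<Gamma>)) (add_mset (CondL x a A B) \<Delta>)"
| barL: "nfresh n (add_mset (CondL x a A B) \<Gamma>) \<Delta> \<Longrightarrow>
     derivable b s (add_mset (InN (NL n) x) (add_mset (Sub (NL n) a)
        (add_mset (FEx (NL n) A) (add_mset (FAll (NL n) (Impl A B)) \<Gamma>)))) \<Delta> \<Longrightarrow>
     derivable b s (add_mset (CondL x a A B) \<Gamma>) \<Delta>"
| refl: "derivable b s (add_mset (Sub a a) \<Gamma>) \<Delta> \<Longrightarrow> derivable b s \<Gamma> \<Delta>"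
| trans: "derivable b s (add_mset (Sub c a) (add_mset (Sub c b') (add_mset (Sub b' a) \<Gamma>))) \<Delta> \<Longrightarrow>
     derivable b s (add_mset (Sub c b') (add_mset (Sub b' a) \<Gamma>)) \<Delta>"
| subL: "derivable b s (add_mset (Mem x a) (add_mset (Sub a b') (add_mset (Mem x b') \<Gamma>))) \<Delta> \<Longrightarrow>
     derivable b s (add_mset (Mem x a) (add_mset (Sub a b') \<Gamma>)) \<Delta>"
| ruleN: "hasN b \<Longrightarrow> nfresh n \<Gamma> \<Delta> \<Longrightarrow>
     derivable b s (add_mset (InN (NL n) x) \<Gamma>) \<Delta> \<Longrightarrow> derivable b s \<Gamma> \<Delta>"
| rule0: "hasN b \<Longrightarrow> wfresh y (add_mset (InN a x) \<Gamma>) \<Delta> \<Longrightarrow>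
     derivable b s (add_mset (Mem y a) (add_mset (InN a x) \<Gamma>)) \<Delta> \<Longrightarrow>
     derivable b s (add_mset (InN a x) \<Gamma>) \<Delta>"
| ruleT: "hasT b \<Longrightarrow> nfresh n \<Gamma> \<Delta> \<Longrightarrow>
     derivable b s (add_mset (Mem x (NL n)) (add_mset (InN (NL n) x) \<Gamma>)) \<Delta> \<Longrightarrow>
     derivable b s \<Gamma> \<Delta>"
| ruleW: "hasW b \<Longrightarrow>
     derivable b s (add_mset (Mem x a) (add_mset (InN a x) \<Gamma>)) \<Delta> \<Longrightarrow>
     derivable b s (add_mset (InN a x) \<Gamma>) \<Delta>"
| ruleSingle: "hasC b \<Longrightarrow>
     derivable b s (add_mset (Mem x (Sing x)) (add_mset (InN (Sing x) x) \<Gamma>)) \<Delta> \<Longrightarrow>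
     derivable b s (add_mset (InN (Sing x) x) \<Gamma>) \<Delta>"
| ruleC: "hasC b \<Longrightarrow>
     derivable b s (add_mset (InN (Sing x) x) (add_mset (Sub (Sing x) a) (add_mset (InN a x) \<Gamma>))) \<Delta> \<Longrightarrow>
     derivable b s (add_mset (InN a x) \<Gamma>) \<Delta>"
| repl1: "hasC b \<Longrightarrow>
     derivable b s (add_mset (Mem y (Sing x)) (add_mset (at P x) (add_mset (at P y) \<Gamma>))) \<Delta> \<Longrightarrow>
     derivable b s (add_mset (Mem y (Sing x)) (add_mset (at P x) \<Gamma>)) \<Delta>"
| repl2: "hasC b \<Longrightarrow>
     derivable b s (add_mset (Mem y (Sing x)) (add_mset (at P x) (add_mset (at P y) \<Gamma>))) \<Delta> \<Longrightarrow>
     derivable b s (add_mset (Mem y (Sing x)) (add_mset (at P y) \<Gamma>)) \<Delta>"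
\<comment> \<open>U and A rules; the principal atoms are only required to be present in the
   antecedent, which covers both the plain and the contracted instances\<close>
| ruleU1: "s = SU \<Longrightarrow> nfresh n \<Gamma> \<Delta> \<Longrightarrow>
     InN a x \<in># \<Gamma> \<Longrightarrow> Mem y a \<in># \<Gamma> \<Longrightarrow> InN b' y \<in># \<Gamma> \<Longrightarrow> Mem z b' \<in># \<Gamma> \<Longrightarrow>
     derivable b s (add_mset (Mem z (NL n)) (add_mset (InN (NL n) x) \<Gamma>)) \<Delta> \<Longrightarrow>
     derivable b s \<Gamma> \<Delta>"
| ruleU2: "s = SU \<Longrightarrow> nfresh n \<Gamma> \<Delta> \<Longrightarrow>
     InN a x \<in># \<Gamma> \<Longrightarrow> Mem y a \<in># \<Gamma> \<Longrightarrow> InN b' x \<in># \<Gamma> \<Longrightarrow> Mem z b' \<in># \<Gamma> \<Longrightarrow>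
     derivable b s (add_mset (Mem z (NL n)) (add_mset (InN (NL n) y) \<Gamma>)) \<Delta> \<Longrightarrow>
     derivable b s \<Gamma> \<Delta>"
| ruleA1: "s = SA \<Longrightarrow>
     InN a x \<in># \<Gamma> \<Longrightarrow> Mem y a \<in># \<Gamma> \<Longrightarrow> InN b' x \<in># \<Gamma> \<Longrightarrow>
     derivable b s (add_mset (InN b' y) \<Gamma>) \<Delta> \<Longrightarrow>
     derivable b s \<Gamma> \<Delta>"
| ruleA2: "s = SA \<Longrightarrow>
     InN a x \<in># \<Gamma> \<Longrightarrow> Mem y a \<in># \<Gamma> \<Longrightarrow> InN b' y \<in># \<Gamma> \<Longrightarrow>
     derivable b s (add_mset (InN b' x) \<Gamma>) \<Delta> \<Longrightarrow>
     derivable b s \<Gamma> \<Delta>"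

text \<open>Worlds are the elements of the type 'w (so W is non-empty); V p is the truth set of p.\<close>
fun forces :: "('w \<Rightarrow> 'w set set) \<Rightarrow> (nat \<Rightarrow> 'w set) \<Rightarrow> 'w \<Rightarrow> fm \<Rightarrow> bool" where
  "forces N V w (Atm p) = (w \<in> V p)"
| "forces N V w Bot = False"
| "forces N V w (Conj A B) = (forces N V w A \<and> forces N V w B)"
| "forces N V w (Disj A B) = (forces N V w A \<or> forces N V w B)"
| "forces N V w (Impl A B) = (forces N V w A \<longrightarrow> forces N V w B)"
| "forces N V w (Cnd A B) =
     (\<forall>\<alpha> \<in> N w. (\<exists>v \<in> \<alpha>. forces N V v A) \<longrightarrow>
        (\<exists>\<beta> \<in> N w. \<beta> \<subseteq> \<alpha> \<and> (\<exists>v \<in> \<beta>. forces N V v A) \<and>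
            (\<forall>v \<in> \<beta>. forces N V v A \<longrightarrow> forces N V v B)))"

definition nbhd_model :: "('w \<Rightarrow> 'w set set) \<Rightarrow> bool" where
  "nbhd_model N \<longleftrightarrow> (\<forall>x. \<forall>\<alpha> \<in> N x. \<alpha> \<noteq> {})"

definition normality :: "('w \<Rightarrow> 'w set set) \<Rightarrow> bool" where
  "normality N \<longleftrightarrow> (\<forall>x. N x \<noteq> {})"

definition total_reflexivity :: "('w \<Rightarrow> 'w set set) \<Rightarrow> bool" where
  "total_reflexivity N \<longleftrightarrow> (\<forall>x. \<exists>\<alpha> \<in> N x. x \<in> \<alpha>)"

definition weak_centering :: "('w \<Rightarrow> 'w set set) \<Rightarrow> bool" where
  "weak_centering N \<longleftrightarrow> (\<forall>x. \<forall>\<alpha> \<in> N x. x \<in> \<alpha>)"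

definition centering :: "('w \<Rightarrow> 'w set set) \<Rightarrow> bool" where
  "centering N \<longleftrightarrow> weak_centering N \<and> (\<forall>x. {x} \<in> N x)"

definition uniformity :: "('w \<Rightarrow> 'w set set) \<Rightarrow> bool" where
  "uniformity N \<longleftrightarrow> (\<forall>x \<alpha> y. \<alpha> \<in> N x \<longrightarrow> y \<in> \<alpha> \<longrightarrow> \<Union>(N x) = \<Union>(N y))"

definition absoluteness :: "('w \<Rightarrow> 'w set set) \<Rightarrow> bool" where
  "absoluteness N \<longleftrightarrow> (\<forall>x \<alpha> y. \<alpha> \<in> N x \<longrightarrow> y \<in> \<alpha> \<longrightarrow> N x = N y)"

definition in_class :: "base \<Rightarrow> sfx \<Rightarrow> ('w \<Rightarrow> 'w set set) \<Rightarrow> bool" where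
  "in_class b s N \<longleftrightarrow> nbhd_model N
     \<and> (hasN b \<longrightarrow> normality N)
     \<and> (hasT b \<longrightarrow> total_reflexivity N)
     \<and> (hasW b \<longrightarrow> weak_centering N)
     \<and> (hasC b \<longrightarrow> centering N)
     \<and> (s = SU \<longrightarrow> uniformity N)
     \<and> (s = SA \<longrightarrow> absoluteness N)"

fun sat :: "('w \<Rightarrow> 'w set set) \<Rightarrow> (nat \<Rightarrow> 'w set) \<Rightarrow> (wlab \<Rightarrow> 'w) \<Rightarrow> (nlab \<Rightarrow> 'w set) \<Rightarrow> lf \<Rightarrow> bool" where
  "sat N V \<rho> \<sigma> (InN a x) = (\<sigma> a \<in> N (\<rho> x))"
| "sat N V \<rho> \<sigma> (Mem x a) = (\<rho> x \<in> \<sigma> a)"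
| "sat N V \<rho> \<sigma> (Sub a b) = (\<sigma> a \<subseteq> \<sigma> b)"
| "sat N V \<rho> \<sigma> (Lab x A) = forces N V (\<rho> x) A"
| "sat N V \<rho> \<sigma> (FAll a A) = (\<forall>w \<in> \<sigma> a. forces N V w A)"
| "sat N V \<rho> \<sigma> (FEx a A) = (\<exists>w \<in> \<sigma> a. forces N V w A)"
| "sat N V \<rho> \<sigma> (CondL x a A B) =
     (\<exists>\<beta> \<in> N (\<rho> x). \<beta> \<subseteq> \<sigma> a \<and> (\<exists>w \<in> \<beta>. forces N V w A) \<and>
        (\<forall>w \<in> \<beta>. forces N V w (Impl A B)))"

definition realization :: "(wlab \<Rightarrow> 'w) \<Rightarrow> (nlab \<Rightarrow> 'w set) \<Rightarrow> bool" where
  "realization \<rho> \<sigma> \<longleftrightarrow> (\<forall>x. \<sigma> (Sing x) = {\<rho> x})"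

definition valid :: "('w \<Rightarrow> 'w set set) \<Rightarrow> (nat \<Rightarrow> 'w set) \<Rightarrow> lf multiset \<Rightarrow> lf multiset \<Rightarrow> bool" where
  "valid N V \<Gamma> \<Delta> \<longleftrightarrow> (\<forall>\<rho> \<sigma>. realization \<rho> \<sigma> \<longrightarrow>
     (\<exists>\<phi> \<in># \<Gamma>. \<not> sat N V \<rho> \<sigma> \<phi>) \<or> (\<exists>\<phi> \<in># \<Delta>. sat N V \<rho> \<sigma> \<phi>))"

end

theory Submission
  imports Defs
begin

text \<open>For a rule with an
  eigenlabel, the premiss is evaluated under a realization that sends the fresh label to a
  witness (a world or a neighbourhood) supplied by the semantic clause of the principal
  formula or by the frame condition behind the rule; since truth of a labelled formula only
  depends on the labels occurring in it, this does not affect the rest of the sequent.\<close>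

definition sequent_holds ::
  "('w \<Rightarrow> 'w set set) \<Rightarrow> (nat \<Rightarrow> 'w set) \<Rightarrow> (wlab \<Rightarrow> 'w) \<Rightarrow> (nlab \<Rightarrow> 'w set) \<Rightarrow>
   lf multiset \<Rightarrow> lf multiset \<Rightarrow> bool" where
  "sequent_holds N V \<rho> \<sigma> \<Gamma> \<Delta> \<longleftrightarrow>
     (\<exists>\<phi> \<in># \<Gamma>. \<not> sat N V \<rho> \<sigma> \<phi>) \<or> (\<exists>\<phi> \<in># \<Delta>. sat N V \<rho> \<sigma> \<phi>)"

lemma sequent_holds_add_mset_left [simp]:
  "sequent_holds N V \<rho> \<sigma> (add_mset \<phi> \<Gamma>) \<Delta> \<longleftrightarrow>
     \<not> sat N V \<rho> \<sigma> \<phi> \<or> sequent_holds N V \<rho> \<sigma> \<Gamma> \<Delta>"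
  by (auto simp: sequent_holds_def)

lemma sequent_holds_add_mset_right [simp]:
  "sequent_holds N V \<rho> \<sigma> \<Gamma> (add_mset \<phi> \<Delta>) \<longleftrightarrow>
     sat N V \<rho> \<sigma> \<phi> \<or> sequent_holds N V \<rho> \<sigma> \<Gamma> \<Delta>"
  by (auto simp: sequent_holds_def)

lemma valid_iff_sequent_holds:
  "valid N V \<Gamma> \<Delta> \<longleftrightarrow> (\<forall>\<rho> \<sigma>. realization \<rho> \<sigma> \<longrightarrow> sequent_holds N V \<rho> \<sigma> \<Gamma> \<Delta>)"
  by (simp add: valid_def sequent_holds_def)

lemma sat_if_not_sequent_holds:
  "\<not> sequent_holds N V \<rho> \<sigma> \<Gamma> \<Delta> \<Longrightarrow> \<phi> \<in># \<Gamma> \<Longrightarrow> sat N V \<rho> \<sigma> \<phi>"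
  by (auto simp: sequent_holds_def)

lemma sat_cong:
  assumes "\<And>y. y \<in> wlabs \<phi> \<Longrightarrow> \<rho>' y = \<rho> y" and "\<And>a. a \<in> nlabs \<phi> \<Longrightarrow> \<sigma>' a = \<sigma> a"
  shows "sat N V \<rho>' \<sigma>' \<phi> = sat N V \<rho> \<sigma> \<phi>"
  using assms by (cases \<phi>) auto

lemma sat_at_cong: "\<rho> y = \<rho> x \<Longrightarrow> sat N V \<rho> \<sigma> (at P y) = sat N V \<rho> \<sigma> (at P x)"
  by (cases P) auto

lemma sequent_holds_cong:
  assumes "\<And>\<phi> y. \<phi> \<in># \<Gamma> + \<Delta> \<Longrightarrow> y \<in> wlabs \<phi> \<Longrightarrow> \<rho>' y = \<rho> y"
    and "\<And>\<phi> a. \<phi> \<in># \<Gamma> + \<Delta> \<Longrightarrow> a \<in> nlabs \<phi> \<Longrightarrow> \<sigma>' a = \<sigma> a"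
  shows "sequent_holds N V \<rho>' \<sigma>' \<Gamma> \<Delta> = sequent_holds N V \<rho> \<sigma> \<Gamma> \<Delta>"
proof -
  have "sat N V \<rho>' \<sigma>' \<phi> = sat N V \<rho> \<sigma> \<phi>" if "\<phi> \<in># \<Gamma> + \<Delta>" for \<phi>
    using assms that by (metis sat_cong)
  then show ?thesis unfolding sequent_holds_def by auto
qed

lemma wl_of_n_subset_wlabs: "a \<in> nlabs \<phi> \<Longrightarrow> wl_of_n a \<subseteq> wlabs \<phi>"
  by (cases \<phi>) auto

lemma fresh_NL_realization:
  assumes "realization \<rho> \<sigma>" and "nfresh n \<Gamma> \<Delta>"
  obtains \<sigma>' where "realization \<rho> \<sigma>'" "\<sigma>' (NL n) = S" "\<And>a. a \<noteq> NL n \<Longrightarrow> \<sigma>' a = \<sigma> a"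
    "sequent_holds N V \<rho> \<sigma>' \<Gamma> \<Delta> \<longleftrightarrow> sequent_holds N V \<rho> \<sigma> \<Gamma> \<Delta>"
proof (rule that[of "\<sigma>(NL n := S)"])
  show "realization \<rho> (\<sigma>(NL n := S))"
    using assms(1) by (simp add: realization_def)
  show "sequent_holds N V \<rho> (\<sigma>(NL n := S)) \<Gamma> \<Delta> \<longleftrightarrow> sequent_holds N V \<rho> \<sigma> \<Gamma> \<Delta>"
    using assms(2) by (intro sequent_holds_cong) (auto simp: nfresh_def)
qed simp_all

lemma fresh_wlab_realization:
  assumes "realization \<rho> \<sigma>" and "wfresh x \<Gamma> \<Delta>"
  obtains \<rho>' \<sigma>' where "realization \<rho>' \<sigma>'" "\<rho>' x = w" "\<And>a. x \<notin> wl_of_n a \<Longrightarrow> \<sigma>' a = \<sigma> a"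
    "sequent_holds N V \<rho>' \<sigma>' \<Gamma> \<Delta> \<longleftrightarrow> sequent_holds N V \<rho> \<sigma> \<Gamma> \<Delta>"
proof (rule that[of "\<rho>(x := w)" "\<sigma>(Sing x := {w})"])
  show "realization (\<rho>(x := w)) (\<sigma>(Sing x := {w}))"
    using assms(1) by (simp add: realization_def)
  show fresh_nlab: "(\<sigma>(Sing x := {w})) a = \<sigma> a" if "x \<notin> wl_of_n a" for a
    using that by auto
  show "sequent_holds N V (\<rho>(x := w)) (\<sigma>(Sing x := {w})) \<Gamma> \<Delta> \<longleftrightarrow> sequent_holds N V \<rho> \<sigma> \<Gamma> \<Delta>"
    using assms(2) by (intro sequent_holds_cong fresh_nlab)
      (auto simp: wfresh_def dest: wl_of_n_subset_wlabs)
qed simp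

lemma allR_sound:
  assumes fresh: "wfresh x \<Gamma> (add_mset (FAll a A) \<Delta>)"
    and prem: "\<And>\<rho>' \<sigma>'. realization \<rho>' \<sigma>' \<Longrightarrow>
      sequent_holds N V \<rho>' \<sigma>' (add_mset (Mem x a) \<Gamma>) (add_mset (Lab x A) \<Delta>)"
    and "realization \<rho> \<sigma>"
  shows "sequent_holds N V \<rho> \<sigma> \<Gamma> (add_mset (FAll a A) \<Delta>)"
proof (cases "sat N V \<rho> \<sigma> (FAll a A)")
  case False
  then obtain w where w: "w \<in> \<sigma> a" "\<not> forces N V w A" by auto
  obtain \<rho>' \<sigma>' where real': "realization \<rho>' \<sigma>'" and "\<rho>' x = w"
    and fresh_nlab: "\<And>c. x \<notin> wl_of_n c \<Longrightarrow> \<sigma>' c = \<sigma> c"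
    and "sequent_holds N V \<rho>' \<sigma>' \<Gamma> (add_mset (FAll a A) \<Delta>) \<longleftrightarrow> ?thesis"
    using fresh_wlab_realization[OF \<open>realization \<rho> \<sigma>\<close> fresh, where w = w and N = N and V = V]
    by blast
  moreover have "\<sigma>' a = \<sigma> a" using fresh_nlab fresh by (simp add: wfresh_def)
  ultimately show ?thesis using w prem[OF real'] by auto
qed simp

lemma exL_sound:
  assumes fresh: "wfresh x (add_mset (FEx a A) \<Gamma>) \<Delta>"
    and prem: "\<And>\<rho>' \<sigma>'. realization \<rho>' \<sigma>' \<Longrightarrow>
      sequent_holds N V \<rho>' \<sigma>' (add_mset (Mem x a) (add_mset (Lab x A) \<Gamma>)) \<Delta>"
    and "realization \<rho> \<sigma>"
  shows "sequent_holds N V \<rho> \<sigma> (add_mset (FEx a A) \<Gamma>) \<Delta>"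
proof (cases "sat N V \<rho> \<sigma> (FEx a A)")
  case True
  then obtain w where w: "w \<in> \<sigma> a" "forces N V w A" by auto
  obtain \<rho>' \<sigma>' where real': "realization \<rho>' \<sigma>'" and "\<rho>' x = w"
    and fresh_nlab: "\<And>c. x \<notin> wl_of_n c \<Longrightarrow> \<sigma>' c = \<sigma> c"
    and "sequent_holds N V \<rho>' \<sigma>' (add_mset (FEx a A) \<Gamma>) \<Delta> \<longleftrightarrow> ?thesis"
    using fresh_wlab_realization[OF \<open>realization \<rho> \<sigma>\<close> fresh, where w = w and N = N and V = V]
    by blast
  moreover have "\<sigma>' a = \<sigma> a" using fresh_nlab fresh by (simp add: wfresh_def)
  ultimately show ?thesis using w prem[OF real'] by auto
qed simp

lemma rule0_sound:
  assumes "nbhd_model N"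
    and fresh: "wfresh y (add_mset (InN a x) \<Gamma>) \<Delta>"
    and prem: "\<And>\<rho>' \<sigma>'. realization \<rho>' \<sigma>' \<Longrightarrow>
      sequent_holds N V \<rho>' \<sigma>' (add_mset (Mem y a) (add_mset (InN a x) \<Gamma>)) \<Delta>"
    and "realization \<rho> \<sigma>"
  shows "sequent_holds N V \<rho> \<sigma> (add_mset (InN a x) \<Gamma>) \<Delta>"
proof (cases "sat N V \<rho> \<sigma> (InN a x)")
  case True
  with \<open>nbhd_model N\<close> have "\<sigma> a \<noteq> {}" by (simp add: nbhd_model_def)
  then obtain w where w: "w \<in> \<sigma> a" by blast
  obtain \<rho>' \<sigma>' where real': "realization \<rho>' \<sigma>'" and "\<rho>' y = w"
    and fresh_nlab: "\<And>c. y \<notin> wl_of_n c \<Longrightarrow> \<sigma>' c = \<sigma> c"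
    and "sequent_holds N V \<rho>' \<sigma>' (add_mset (InN a x) \<Gamma>) \<Delta> \<longleftrightarrow> ?thesis"
    using fresh_wlab_realization[OF \<open>realization \<rho> \<sigma>\<close> fresh, where w = w and N = N and V = V]
    by blast
  moreover have "\<sigma>' a = \<sigma> a" using fresh_nlab fresh by (simp add: wfresh_def)
  ultimately show ?thesis using w prem[OF real'] by auto
qed simp

lemma condR_sound:
  assumes fresh: "nfresh n \<Gamma> (add_mset (Lab x (Cnd A B)) \<Delta>)"
    and prem: "\<And>\<rho>' \<sigma>'. realization \<rho>' \<sigma>' \<Longrightarrow>
      sequent_holds N V \<rho>' \<sigma>' (add_mset (InN (NL n) x) (add_mset (FEx (NL n) A) \<Gamma>))
        (add_mset (CondL x (NL n) A B) \<Delta>)"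
    and "realization \<rho> \<sigma>"
  shows "sequent_holds N V \<rho> \<sigma> \<Gamma> (add_mset (Lab x (Cnd A B)) \<Delta>)"
proof (cases "sat N V \<rho> \<sigma> (Lab x (Cnd A B))")
  case False
  then obtain \<alpha> where \<alpha>: "\<alpha> \<in> N (\<rho> x)" "\<exists>v \<in> \<alpha>. forces N V v A"
    and no_\<beta>: "\<not> (\<exists>\<beta> \<in> N (\<rho> x). \<beta> \<subseteq> \<alpha> \<and> (\<exists>v \<in> \<beta>. forces N V v A) \<and>
                  (\<forall>v \<in> \<beta>. forces N V v A \<longrightarrow> forces N V v B))"
    by auto
  obtain \<sigma>' where real': "realization \<rho> \<sigma>'" and "\<sigma>' (NL n) = \<alpha>"
    and "sequent_holds N V \<rho> \<sigma>' \<Gamma> (add_mset (Lab x (Cnd A B)) \<Delta>) \<longleftrightarrow> ?thesis"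
    using fresh_NL_realization[OF \<open>realization \<rho> \<sigma>\<close> fresh, where S = \<alpha> and N = N and V = V]
    by blast
  with \<alpha> no_\<beta> prem[OF real'] show ?thesis by auto
qed simp

lemma barL_sound:
  assumes fresh: "nfresh n (add_mset (CondL x a A B) \<Gamma>) \<Delta>"
    and prem: "\<And>\<rho>' \<sigma>'. realization \<rho>' \<sigma>' \<Longrightarrow>
      sequent_holds N V \<rho>' \<sigma>' (add_mset (InN (NL n) x) (add_mset (Sub (NL n) a)
        (add_mset (FEx (NL n) A) (add_mset (FAll (NL n) (Impl A B)) \<Gamma>)))) \<Delta>"
    and "realization \<rho> \<sigma>"
  shows "sequent_holds N V \<rho> \<sigma> (add_mset (CondL x a A B) \<Gamma>) \<Delta>"
proof (cases "sat N V \<rho> \<sigma> (CondL x a A B)")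
  case True
  then obtain \<beta> where \<beta>: "\<beta> \<in> N (\<rho> x)" "\<beta> \<subseteq> \<sigma> a" "\<exists>v \<in> \<beta>. forces N V v A"
    "\<forall>v \<in> \<beta>. forces N V v A \<longrightarrow> forces N V v B"
    by auto
  obtain \<sigma>' where real': "realization \<rho> \<sigma>'" and "\<sigma>' (NL n) = \<beta>"
    and fresh_nlab: "\<And>c. c \<noteq> NL n \<Longrightarrow> \<sigma>' c = \<sigma> c"
    and "sequent_holds N V \<rho> \<sigma>' (add_mset (CondL x a A B) \<Gamma>) \<Delta> \<longleftrightarrow> ?thesis"
    using fresh_NL_realization[OF \<open>realization \<rho> \<sigma>\<close> fresh, where S = \<beta> and N = N and V = V]
    by blast
  moreover have "\<sigma>' a = \<sigma> a" using fresh_nlab fresh by (auto simp: nfresh_def)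
  ultimately show ?thesis using \<beta> prem[OF real'] by auto
qed simp

lemma ruleN_sound:
  assumes "normality N" and fresh: "nfresh n \<Gamma> \<Delta>"
    and prem: "\<And>\<rho>' \<sigma>'. realization \<rho>' \<sigma>' \<Longrightarrow>
      sequent_holds N V \<rho>' \<sigma>' (add_mset (InN (NL n) x) \<Gamma>) \<Delta>"
    and "realization \<rho> \<sigma>"
  shows "sequent_holds N V \<rho> \<sigma> \<Gamma> \<Delta>"
proof -
  obtain \<alpha> where "\<alpha> \<in> N (\<rho> x)" using \<open>normality N\<close> by (auto simp: normality_def)
  moreover obtain \<sigma>' where real': "realization \<rho> \<sigma>'" and "\<sigma>' (NL n) = \<alpha>"
    and "sequent_holds N V \<rho> \<sigma>' \<Gamma> \<Delta> \<longleftrightarrow> ?thesis"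
    using fresh_NL_realization[OF \<open>realization \<rho> \<sigma>\<close> fresh, where S = \<alpha> and N = N and V = V]
    by blast
  ultimately show ?thesis using prem[OF real'] by auto
qed

lemma ruleT_sound:
  assumes "total_reflexivity N" and fresh: "nfresh n \<Gamma> \<Delta>"
    and prem: "\<And>\<rho>' \<sigma>'. realization \<rho>' \<sigma>' \<Longrightarrow>
      sequent_holds N V \<rho>' \<sigma>' (add_mset (Mem x (NL n)) (add_mset (InN (NL n) x) \<Gamma>)) \<Delta>"
    and "realization \<rho> \<sigma>"
  shows "sequent_holds N V \<rho> \<sigma> \<Gamma> \<Delta>"
proof -
  obtain \<alpha> where "\<alpha> \<in> N (\<rho> x)" "\<rho> x \<in> \<alpha>"
    using \<open>total_reflexivity N\<close> by (auto simp: total_reflexivity_def)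
  moreover obtain \<sigma>' where real': "realization \<rho> \<sigma>'" and "\<sigma>' (NL n) = \<alpha>"
    and "sequent_holds N V \<rho> \<sigma>' \<Gamma> \<Delta> \<longleftrightarrow> ?thesis"
    using fresh_NL_realization[OF \<open>realization \<rho> \<sigma>\<close> fresh, where S = \<alpha> and N = N and V = V]
    by blast
  ultimately show ?thesis using prem[OF real'] by auto
qed

lemma ruleU1_sound:
  assumes "uniformity N" and fresh: "nfresh n \<Gamma> \<Delta>"
    and "InN a x \<in># \<Gamma>" "Mem y a \<in># \<Gamma>" "InN b y \<in># \<Gamma>" "Mem z b \<in># \<Gamma>"
    and prem: "\<And>\<rho>' \<sigma>'. realization \<rho>' \<sigma>' \<Longrightarrow>
      sequent_holds N V \<rho>' \<sigma>' (add_mset (Mem z (NL n)) (add_mset (InN (NL n) x) \<Gamma>)) \<Delta>"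
    and "realization \<rho> \<sigma>"
  shows "sequent_holds N V \<rho> \<sigma> \<Gamma> \<Delta>"
proof (rule ccontr)
  assume fails: "\<not> ?thesis"
  with assms(3-6) have "\<sigma> a \<in> N (\<rho> x)" "\<rho> y \<in> \<sigma> a" "\<sigma> b \<in> N (\<rho> y)" "\<rho> z \<in> \<sigma> b"
    by (auto dest: sat_if_not_sequent_holds)
  with \<open>uniformity N\<close> have "\<rho> z \<in> \<Union>(N (\<rho> x))" unfolding uniformity_def by blast
  then obtain \<gamma> where "\<gamma> \<in> N (\<rho> x)" "\<rho> z \<in> \<gamma>" by blast
  moreover obtain \<sigma>' where real': "realization \<rho> \<sigma>'" and "\<sigma>' (NL n) = \<gamma>"
    and "sequent_holds N V \<rho> \<sigma>' \<Gamma> \<Delta> \<longleftrightarrow> ?thesis"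
    using fresh_NL_realization[OF \<open>realization \<rho> \<sigma>\<close> fresh, where S = \<gamma> and N = N and V = V]
    by blast
  ultimately show False using prem[OF real'] fails by auto
qed

lemma ruleU2_sound:
  assumes "uniformity N" and fresh: "nfresh n \<Gamma> \<Delta>"
    and "InN a x \<in># \<Gamma>" "Mem y a \<in># \<Gamma>" "InN b x \<in># \<Gamma>" "Mem z b \<in># \<Gamma>"
    and prem: "\<And>\<rho>' \<sigma>'. realization \<rho>' \<sigma>' \<Longrightarrow>
      sequent_holds N V \<rho>' \<sigma>' (add_mset (Mem z (NL n)) (add_mset (InN (NL n) y) \<Gamma>)) \<Delta>"
    and "realization \<rho> \<sigma>"
  shows "sequent_holds N V \<rho> \<sigma> \<Gamma> \<Delta>"
proof (rule ccontr)
  assume fails: "\<not> ?thesis"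
  with assms(3-6) have "\<sigma> a \<in> N (\<rho> x)" "\<rho> y \<in> \<sigma> a" "\<sigma> b \<in> N (\<rho> x)" "\<rho> z \<in> \<sigma> b"
    by (auto dest: sat_if_not_sequent_holds)
  with \<open>uniformity N\<close> have "\<rho> z \<in> \<Union>(N (\<rho> y))" unfolding uniformity_def by blast
  then obtain \<gamma> where "\<gamma> \<in> N (\<rho> y)" "\<rho> z \<in> \<gamma>" by blast
  moreover obtain \<sigma>' where real': "realization \<rho> \<sigma>'" and "\<sigma>' (NL n) = \<gamma>"
    and "sequent_holds N V \<rho> \<sigma>' \<Gamma> \<Delta> \<longleftrightarrow> ?thesis"
    using fresh_NL_realization[OF \<open>realization \<rho> \<sigma>\<close> fresh, where S = \<gamma> and N = N and V = V]
    by blast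
  ultimately show False using prem[OF real'] fails by auto
qed

lemma ruleA1_sound:
  assumes "absoluteness N" and "InN a x \<in># \<Gamma>" "Mem y a \<in># \<Gamma>" "InN b x \<in># \<Gamma>"
    and prem: "sequent_holds N V \<rho> \<sigma> (add_mset (InN b y) \<Gamma>) \<Delta>"
  shows "sequent_holds N V \<rho> \<sigma> \<Gamma> \<Delta>"
proof (rule ccontr)
  assume fails: "\<not> ?thesis"
  with assms(2-4) have "\<sigma> a \<in> N (\<rho> x)" "\<rho> y \<in> \<sigma> a" "\<sigma> b \<in> N (\<rho> x)"
    by (auto dest: sat_if_not_sequent_holds)
  with \<open>absoluteness N\<close> have "\<sigma> b \<in> N (\<rho> y)" by (auto simp: absoluteness_def)
  with fails prem show False by simp
qed

lemma ruleA2_sound: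
  assumes "absoluteness N" and "InN a x \<in># \<Gamma>" "Mem y a \<in># \<Gamma>" "InN b y \<in># \<Gamma>"
    and prem: "sequent_holds N V \<rho> \<sigma> (add_mset (InN b x) \<Gamma>) \<Delta>"
  shows "sequent_holds N V \<rho> \<sigma> \<Gamma> \<Delta>"
proof (rule ccontr)
  assume fails: "\<not> ?thesis"
  with assms(2-4) have "\<sigma> a \<in> N (\<rho> x)" "\<rho> y \<in> \<sigma> a" "\<sigma> b \<in> N (\<rho> y)"
    by (auto dest: sat_if_not_sequent_holds)
  with \<open>absoluteness N\<close> have "\<sigma> b \<in> N (\<rho> x)" by (auto simp: absoluteness_def)
  with fails prem show False by simp
qed

lemma derivable_sequent_holds:
  assumes "derivable b s \<Gamma> \<Delta>" and "in_class b s N" and "realization \<rho> \<sigma>"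
  shows "sequent_holds N V \<rho> \<sigma> \<Gamma> \<Delta>"
proof -
  from assms(2) have class_conditions: "nbhd_model N" "hasN b \<Longrightarrow> normality N"
    "hasT b \<Longrightarrow> total_reflexivity N" "hasW b \<Longrightarrow> weak_centering N" "hasC b \<Longrightarrow> centering N"
    "s = SU \<Longrightarrow> uniformity N" "s = SA \<Longrightarrow> absoluteness N"
    by (simp_all add: in_class_def)
  from assms(1,3) show ?thesis
  proof (induction arbitrary: \<rho> \<sigma> rule: derivable.induct)
    case allR from allR.hyps(1) allR.IH allR.prems show ?case by (rule allR_sound)
  next
    case exL from exL.hyps(1) exL.IH exL.prems show ?case by (rule exL_sound)
  next
    case condR from condR.hyps(1) condR.IH condR.prems show ?case by (rule condR_sound)
  next
    case barL from barL.hyps(1) barL.IH barL.prems show ?case by (rule barL_sound)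
  next
    case rule0
    from class_conditions(1) rule0.hyps(2) rule0.IH rule0.prems show ?case by (rule rule0_sound)
  next
    case ruleN
    from class_conditions(2)[OF ruleN.hyps(1)] ruleN.hyps(2) ruleN.IH ruleN.prems
    show ?case by (rule ruleN_sound)
  next
    case ruleT
    from class_conditions(3)[OF ruleT.hyps(1)] ruleT.hyps(2) ruleT.IH ruleT.prems
    show ?case by (rule ruleT_sound)
  next
    case ruleU1
    from class_conditions(6)[OF ruleU1.hyps(1)] ruleU1.hyps(2-6) ruleU1.IH ruleU1.prems
    show ?case by (rule ruleU1_sound)
  next
    case ruleU2
    from class_conditions(6)[OF ruleU2.hyps(1)] ruleU2.hyps(2-6) ruleU2.IH ruleU2.prems
    show ?case by (rule ruleU2_sound)
  next
    case ruleA1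
    from class_conditions(7)[OF ruleA1.hyps(1)] ruleA1.hyps(2-4) ruleA1.IH[OF ruleA1.prems]
    show ?case by (rule ruleA1_sound)
  next
    case ruleA2
    from class_conditions(7)[OF ruleA2.hyps(1)] ruleA2.hyps(2-4) ruleA2.IH[OF ruleA2.prems]
    show ?case by (rule ruleA2_sound)
  next
    case ruleW
    from class_conditions(4)[OF ruleW.hyps(1)] ruleW.IH[OF ruleW.prems]
    show ?case by (auto simp: weak_centering_def)
  next
    case ruleC
    from class_conditions(5)[OF ruleC.hyps(1)] ruleC.IH[OF ruleC.prems] ruleC.prems
    show ?case by (auto simp: centering_def weak_centering_def realization_def)
  next
    case ruleSingle
    from ruleSingle.IH[OF ruleSingle.prems] ruleSingle.prems
    show ?case by (auto simp: realization_def)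
  next
    case (repl1 y x P)
    from repl1.IH[OF repl1.prems] repl1.prems sat_at_cong[of \<rho> y x]
    show ?case by (auto simp: realization_def)
  next
    case (repl2 y x P)
    from repl2.IH[OF repl2.prems] repl2.prems sat_at_cong[of \<rho> y x]
    show ?case by (auto simp: realization_def)
  next
    case (barR c x a \<Gamma> A B \<Delta>)
    \<comment> \<open>the neighbourhood c itself witnesses the conditional\<close>
    from barR.IH(1,2)[OF barR.prems] show ?case by simp blast
  next
    case condL
    from condL.IH(1,2)[OF condL.prems] show ?case by auto
  qed auto
qed

theorem mainTheorem9:
  fixes b :: base and s :: sfx
    and N :: "'w \<Rightarrow> 'w set set" and V :: "nat \<Rightarrow> 'w set"
    and \<Gamma> \<Delta> :: "lf multiset"
  assumes "derivable b s \<Gamma> \<Delta>"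
    and "in_class b s N"
  shows "valid N V \<Gamma> \<Delta>"
  using derivable_sequent_holds[OF assms] by (simp add: valid_iff_sequent_holds)

end
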